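(* Let $X$ be a set and $\{d_r\colon X\times X\to\mathbb{R}_{\ge0}\cup\{\infty\}\}_{r>0}$ a family satisfying the weaker $\{d_r\}$-axioms (see context). If $p\colon U_p\to X$ is a plot of the diffeology induced by $\{d_r\}_{r>0}$ (see context), then $p$ is continuous, where $X$ carries the topology in which $W\subset X$ is open iff for every $x\in W$ there are $r,\varepsilon>0$ with $\{y\in X\mid d_r(x,y)<\varepsilon\}\subset W$.
   Context: The weaker $\{d_r\}$-axioms, required for all $x,y,z\in X$: (Self-distance) $d_r(x,x)=0$ for all $r>0$. (Upper semi-continuity) if $r_1\le r_2$ then $d_{r_1}(x,y)\le d_{r_2}(x,y)$; and if $d_r(x,y)<\varepsilon$ there is $\delta>0$ with $d_{r+\delta}(x,y)<\varepsilon$. (Weaker triangle inequality) for $r_1,r_2,r_3>0$, if $d_{r_1+r_2+r_3}(x,y)<r_3$ and $d_{r_1+r_2+r_3}(y,z)<r_2$, then $d_{r_1}(x,z)\le d_{r_1+r_2+r_3}(x,y)+d_{r_1+r_2+r_3}(y,z)$. Plots of the induced diffeology: a map $p\colon U_p\to X$ with $U_p$ open in some $\mathbb{R}^n$ such that for each $t_0\in U_p$ there is $\delta>0$ with (1) $t\mapsto d_r(p(t_0),p(t))$ real-valued and continuous on the open ball $B_\delta(t_0)$ for every $r>0$, and (2) for each $t_1\in B_\delta(t_0)\setminus p^{-1}(p(t_0))$ and each $r>0$, $t\mapsto d_r(p(t_1),p(t))$ is smooth at $t_0$. *)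

theory Defs
  imports "HOL-Analysis.Analysis"
begin

text \<open>The space X is modelled by the type 'a; the family {d_r} by
  d :: real => 'a => 'a => ennreal (values in [0,\<infinity>]); only r > 0 matters.\<close>

definition weaker_dr_axioms :: "(real \<Rightarrow> 'a \<Rightarrow> 'a \<Rightarrow> ennreal) \<Rightarrow> bool" where
  "weaker_dr_axioms d \<longleftrightarrow>
     (\<forall>x r. 0 < r \<longrightarrow> d r x x = 0) \<and>
     (\<forall>x y r1 r2. 0 < r1 \<longrightarrow> r1 \<le> r2 \<longrightarrow> d r1 x y \<le> d r2 x y) \<and>
     (\<forall>x y r \<epsilon>. 0 < r \<longrightarrow> d r x y < ennreal \<epsilon> \<longrightarrow>
         (\<exists>\<delta>>0. d (r + \<delta>) x y < ennreal \<epsilon>)) \<and>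
     (\<forall>x y z r1 r2 r3. 0 < r1 \<longrightarrow> 0 < r2 \<longrightarrow> 0 < r3 \<longrightarrow>
         d (r1 + r2 + r3) x y < ennreal r3 \<longrightarrow> d (r1 + r2 + r3) y z < ennreal r2 \<longrightarrow>
         d r1 x z \<le> d (r1 + r2 + r3) x y + d (r1 + r2 + r3) y z)"

fun Ck_on :: "nat \<Rightarrow> 'n::euclidean_space set \<Rightarrow> ('n \<Rightarrow> real) \<Rightarrow> bool" where
  "Ck_on 0 S f = continuous_on S f"
| "Ck_on (Suc k) S f =
     (\<exists>f'. (\<forall>x\<in>S. (f has_derivative f' x) (at x)) \<and> (\<forall>i\<in>Basis. Ck_on k S (\<lambda>x. f' x i)))"

definition smooth_on :: "'n::euclidean_space set \<Rightarrow> ('n \<Rightarrow> real) \<Rightarrow> bool" where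
  "smooth_on S f \<longleftrightarrow> (\<forall>k. Ck_on k S f)"

definition smooth_at_in :: "'n::euclidean_space set \<Rightarrow> 'n \<Rightarrow> ('n \<Rightarrow> real) \<Rightarrow> bool" where
  "smooth_at_in U t0 f \<longleftrightarrow> (\<exists>V. open V \<and> t0 \<in> V \<and> V \<subseteq> U \<and> smooth_on V f)"

definition dr_plot :: "(real \<Rightarrow> 'a \<Rightarrow> 'a \<Rightarrow> ennreal) \<Rightarrow> 'n::euclidean_space set \<Rightarrow> ('n \<Rightarrow> 'a) \<Rightarrow> bool" where
  "dr_plot d U p \<longleftrightarrow> open U \<and>
     (\<forall>t0\<in>U. \<exists>\<delta>>0. ball t0 \<delta> \<subseteq> U \<and>
        (\<forall>r>0. (\<forall>t\<in>ball t0 \<delta>. d r (p t0) (p t) \<noteq> \<infinity>) \<and>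
               continuous_on (ball t0 \<delta>) (\<lambda>t. enn2real (d r (p t0) (p t)))) \<and>
        (\<forall>t1\<in>ball t0 \<delta> - p -` {p t0}. \<forall>r>0.
               smooth_at_in U t0 (\<lambda>t. enn2real (d r (p t1) (p t)))))"

definition dr_open :: "(real \<Rightarrow> 'a \<Rightarrow> 'a \<Rightarrow> ennreal) \<Rightarrow> 'a set \<Rightarrow> bool" where
  "dr_open d W \<longleftrightarrow> (\<forall>x\<in>W. \<exists>r>0. \<exists>\<epsilon>>0. {y. d r x y < ennreal \<epsilon>} \<subseteq> W)"

end

theory Submission
  imports Defs
begin

text \<open>Given t0 \<in> U with p t0 \<in> W, choose a basic neighbourhood {y. d_r(p t0, y) < \<epsilon>} \<subseteq> W.
  Near t0 the map t \<mapsto> d_r(p t0, p t) is finite and continuous (condition (1) of plots) and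
  it vanishes at t0 (self-distance), so it stays below \<epsilon> on a ball around t0, which p maps
  into W.\<close>

lemma continuous_on_enn2real_imp_continuous_on:
  fixes f :: "'b::topological_space \<Rightarrow> ennreal"
  assumes "\<forall>t\<in>S. f t \<noteq> \<infinity>" and "continuous_on S (\<lambda>t. enn2real (f t))"
  shows "continuous_on S f"
proof -
  have "continuous_on S (\<lambda>t. ennreal (enn2real (f t)))"
    using assms(2) by (intro continuous_on_compose2[OF continuous_on_ennreal]) auto
  moreover have "ennreal (enn2real (f t)) = f t" if "t \<in> S" for t
    using assms(1) that by (simp add: ennreal_enn2real_if)
  ultimately show ?thesis
    using continuous_on_cong[OF refl, of S "\<lambda>t. ennreal (enn2real (f t))" f] by simp
qed

lemma dr_plot_distance_continuous:
  assumes "dr_plot d U p" and "t0 \<in> U" and "0 < r"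
  obtains \<delta> where "0 < \<delta>" and "ball t0 \<delta> \<subseteq> U"
    and "continuous_on (ball t0 \<delta>) (\<lambda>t. d r (p t0) (p t))"
proof -
  from assms(1,2) obtain \<delta> where "0 < \<delta>" "ball t0 \<delta> \<subseteq> U"
    and "\<forall>r>0. (\<forall>t\<in>ball t0 \<delta>. d r (p t0) (p t) \<noteq> \<infinity>) \<and>
               continuous_on (ball t0 \<delta>) (\<lambda>t. enn2real (d r (p t0) (p t)))"
    unfolding dr_plot_def by metis
  with assms(3) have "continuous_on (ball t0 \<delta>) (\<lambda>t. d r (p t0) (p t))"
    by (simp add: continuous_on_enn2real_imp_continuous_on)
  with \<open>0 < \<delta>\<close> \<open>ball t0 \<delta> \<subseteq> U\<close> show thesis
    by (rule that)
qed

lemma dr_plot_open_vimage: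
  assumes self_distance: "\<And>x r. 0 < r \<Longrightarrow> d r x x = 0"
    and "dr_plot d U p" and "dr_open d W"
  shows "open (U \<inter> p -` W)"
  unfolding open_contains_ball
proof
  fix t0 assume t0: "t0 \<in> U \<inter> p -` W"
  then obtain r \<epsilon> where "0 < r" "0 < \<epsilon>" and nbhd_W: "{y. d r (p t0) y < ennreal \<epsilon>} \<subseteq> W"
    using \<open>dr_open d W\<close> unfolding dr_open_def by blast
  obtain \<delta> where "0 < \<delta>" and ball_U: "ball t0 \<delta> \<subseteq> U"
    and cont: "continuous_on (ball t0 \<delta>) (\<lambda>t. d r (p t0) (p t))"
    using dr_plot_distance_continuous[OF \<open>dr_plot d U p\<close> _ \<open>0 < r\<close>] t0 by blast
  define V where "V = ball t0 \<delta> \<inter> (\<lambda>t. d r (p t0) (p t)) -` {..<ennreal \<epsilon>}"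
  have "open V"
    unfolding V_def using cont by (intro continuous_open_preimage) auto
  moreover have "t0 \<in> V"
    using \<open>0 < \<delta>\<close> \<open>0 < r\<close> \<open>0 < \<epsilon>\<close> self_distance by (simp add: V_def)
  ultimately obtain e where "0 < e" "ball t0 e \<subseteq> V"
    by (meson open_contains_ball)
  moreover have "V \<subseteq> U \<inter> p -` W"
    using ball_U nbhd_W by (auto simp: V_def)
  ultimately show "\<exists>e>0. ball t0 e \<subseteq> U \<inter> p -` W"
    by blast
qed

theorem lemmaA1:
  fixes d :: "real \<Rightarrow> 'a \<Rightarrow> 'a \<Rightarrow> ennreal"
    and U :: "'n::euclidean_space set" and p :: "'n \<Rightarrow> 'a"
  assumes "weaker_dr_axioms d"
    and "dr_plot d U p"
  shows "\<forall>W. dr_open d W \<longrightarrow> openin (top_of_set U) (U \<inter> p -` W)"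
proof (intro allI impI)
  fix W assume "dr_open d W"
  have "\<And>x r. 0 < r \<Longrightarrow> d r x x = 0"
    using assms(1) unfolding weaker_dr_axioms_def by simp
  then have "open (U \<inter> p -` W)"
    using assms(2) \<open>dr_open d W\<close> by (rule dr_plot_open_vimage)
  then show "openin (top_of_set U) (U \<inter> p -` W)"
    by (simp add: open_subset)
qed

end
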